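(* Let $L_n$ and $PL_n$ be as in the context. Then $PL_n$ is a non-abelian free group of finite rank if and only if $n\ge 4$ (for $n=2,3$, $PL_n$ is trivial).
   Context: For $n\ge 2$, $L_n=\langle y_1,\dots,y_{n-1}\mid y_j^2=1\ (1\le j\le n-1),\ y_iy_{i+1}y_i=y_{i+1}y_iy_{i+1}\ (1\le i\le n-2)\rangle$ (no relations between $y_i,y_j$ with $|i-j|\ge 2$). Let $\pi:L_n\to S_n$ be the surjective homomorphism with $\pi(y_i)=(i\ i{+}1)$, the transposition, and $PL_n=\ker\pi$. *)

theory Defs
  imports "HOL-Algebra.Algebra" "HOL-Combinatorics.Transposition"
begin

text \<open>Words in the generators y_1, ..., y_(n-1) of L_n: lists of indices in {1..<n}.
  Since every generator is an involution, no inverse letters are needed.\<close>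

definition Lwords :: "nat \<Rightarrow> nat list set" where
  "Lwords n = {w. set w \<subseteq> {1..<n}}"

inductive_set Lrel :: "nat \<Rightarrow> (nat list \<times> nat list) set" for n :: nat where
  Lrefl: "w \<in> Lwords n \<Longrightarrow> (w, w) \<in> Lrel n"
| Lsym: "(u, v) \<in> Lrel n \<Longrightarrow> (v, u) \<in> Lrel n"
| Ltrans: "(u, v) \<in> Lrel n \<Longrightarrow> (v, w) \<in> Lrel n \<Longrightarrow> (u, w) \<in> Lrel n"
| Lsq: "u \<in> Lwords n \<Longrightarrow> v \<in> Lwords n \<Longrightarrow> 1 \<le> j \<Longrightarrow> j < n
        \<Longrightarrow> (u @ [j, j] @ v, u @ v) \<in> Lrel n"
| Lbraid: "u \<in> Lwords n \<Longrightarrow> v \<in> Lwords n \<Longrightarrow> 1 \<le> i \<Longrightarrow> i + 2 \<le> n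
        \<Longrightarrow> (u @ [i, Suc i, i] @ v, u @ [Suc i, i, Suc i] @ v) \<in> Lrel n"

definition L :: "nat \<Rightarrow> nat list set monoid" where
  "L n = \<lparr> carrier = Lwords n // Lrel n,
           monoid.mult = (\<lambda>A B. \<Union>a\<in>A. \<Union>b\<in>B. Lrel n `` {a @ b}),
           monoid.one = Lrel n `` {[]} \<rparr>"

definition perm_of_word :: "nat list \<Rightarrow> nat \<Rightarrow> nat" where
  "perm_of_word w = foldr (\<lambda>i p. transpose i (Suc i) \<circ> p) w id"

definition PL_set :: "nat \<Rightarrow> nat list set set" where
  "PL_set n = {A \<in> carrier (L n). \<forall>w\<in>A. perm_of_word w = id}"

definition PL :: "nat \<Rightarrow> nat list set monoid" where
  "PL n = (L n)\<lparr> carrier := PL_set n \<rparr>"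

text \<open>A letter is (x, b) with b = True
  meaning the inverse of x.\<close>

fun freely_reduced :: "('a \<times> bool) list \<Rightarrow> bool" where
  "freely_reduced ((x, b) # (y, c) # ws) = ((\<not> (x = y \<and> b \<noteq> c)) \<and> freely_reduced ((y, c) # ws))"
| "freely_reduced _ = True"

definition eval_word :: "('a, 'b) monoid_scheme \<Rightarrow> ('a \<times> bool) list \<Rightarrow> 'a" where
  "eval_word G ws = foldr (\<lambda>xb r. monoid.mult G (if snd xb then m_inv G (fst xb) else fst xb) r) ws (monoid.one G)"

definition free_basis :: "('a, 'b) monoid_scheme \<Rightarrow> 'a set \<Rightarrow> bool" where
  "free_basis G S \<longleftrightarrow> S \<subseteq> carrier G \<and> generate G S = carrier G \<and>
     (\<forall>ws. ws \<noteq> [] \<and> fst ` set ws \<subseteq> S \<and> freely_reduced ws \<longrightarrow> eval_word G ws \<noteq> (monoid.one G))"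

definition free_group_finite_rank :: "('a, 'b) monoid_scheme \<Rightarrow> bool" where
  "free_group_finite_rank G \<longleftrightarrow> group G \<and> (\<exists>S. finite S \<and> free_basis G S)"

definition nonabelian :: "('a, 'b) monoid_scheme \<Rightarrow> bool" where
  "nonabelian G \<longleftrightarrow> (\<exists>x\<in>carrier G. \<exists>y\<in>carrier G. monoid.mult G x y \<noteq> monoid.mult G y x)"

end

theory Submission
  imports Defs "HOL-Combinatorics.Permutations"
begin

text \<open>\<open>PL n\<close> is the kernel of \<open>L n \<rightarrow> S_n\<close>, so the Reidemeister--Schreier method applies.
  As Schreier transversal take the bubble-sort word \<open>w(\<sigma>)\<close> of each permutation (its last letter
  undoes the largest descent).  The Schreier generators \<open>g(\<sigma>, j) = w(\<sigma>) y_j w(\<sigma> s_j)\<inverse>\<close> live on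
  the edges of the Cayley graph of \<open>S_n\<close>: they are trivial on tree edges, reversing an edge
  inverts them, and if \<open>\<sigma>(j+2) < \<sigma>(j) < \<sigma>(j+1)\<close> the relation
  \<open>y_j = y_(j+1) y_j y_(j+1) y_j y_(j+1)\<close> expresses \<open>g(\<sigma>, j)\<close> through generators of index \<open>j+1\<close>
  and generators not of this kind.  The remaining generators, indexed by the free edges, form a
  free basis: Reidemeister rewriting along the same recursion is a homomorphism from \<open>PL n\<close> to
  the free group on the free edges which sends each of them to a single letter.  It respects
  \<open>y_j\<^sup>2\<close> trivially, and the braid relation because the hexagon identity, built into the recursion
  at one vertex of each \<open>S_3\<close>-orbit, propagates around the orbit.  For \<open>n \<le> 3\<close> there is no free
  edge, for \<open>n \<ge> 4\<close> there are at least two.\<close>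

section \<open>The group \<open>L n\<close> and its pure subgroup\<close>

lemma Lwords_append [simp]: "u @ v \<in> Lwords n \<longleftrightarrow> u \<in> Lwords n \<and> v \<in> Lwords n"
  by (auto simp: Lwords_def)

lemma Lwords_Cons [simp]: "j # v \<in> Lwords n \<longleftrightarrow> 1 \<le> j \<and> j < n \<and> v \<in> Lwords n"
  by (auto simp: Lwords_def)

lemma Lwords_Nil [simp]: "[] \<in> Lwords n"
  by (auto simp: Lwords_def)

lemma Lwords_rev [simp]: "rev v \<in> Lwords n \<longleftrightarrow> v \<in> Lwords n"
  by (auto simp: Lwords_def)

lemma Lrel_Lwords: "(u, v) \<in> Lrel n \<Longrightarrow> u \<in> Lwords n \<and> v \<in> Lwords n"
  by (induction rule: Lrel.induct) auto

lemma Lrel_context: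
  assumes "(u, v) \<in> Lrel n" "x \<in> Lwords n" "y \<in> Lwords n"
  shows "(x @ u @ y, x @ v @ y) \<in> Lrel n"
  using assms
proof (induction rule: Lrel.induct)
  case (Lsq u v j)
  have "((x @ u) @ [j, j] @ (v @ y), (x @ u) @ (v @ y)) \<in> Lrel n"
    using Lsq by (intro Lrel.Lsq) auto
  then show ?case by simp
next
  case (Lbraid u v i)
  have "((x @ u) @ [i, Suc i, i] @ (v @ y), (x @ u) @ [Suc i, i, Suc i] @ (v @ y)) \<in> Lrel n"
    using Lbraid by (intro Lrel.Lbraid) auto
  then show ?case by simp
next
  case (Lrefl w)
  then show ?case by (intro Lrel.Lrefl) auto
next
  case (Lsym u v)
  then show ?case by (blast intro: Lrel.Lsym)
next
  case (Ltrans u v w)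
  then show ?case by (blast intro: Lrel.Ltrans)
qed

lemma Lrel_append:
  assumes "(u, v) \<in> Lrel n" "(u', v') \<in> Lrel n"
  shows "(u @ u', v @ v') \<in> Lrel n"
proof -
  have "(u @ u', v @ u') \<in> Lrel n"
    using Lrel_context[OF assms(1), of "[]" u'] Lrel_Lwords[OF assms(2)] by simp
  moreover have "(v @ u', v @ v') \<in> Lrel n"
    using Lrel_context[OF assms(2), of v "[]"] Lrel_Lwords[OF assms(1)] by simp
  ultimately show ?thesis
    by (rule Lrel.Ltrans)
qed

lemma equiv_Lrel: "equiv (Lwords n) (Lrel n)"
  unfolding equiv_def refl_on_def sym_def trans_def
  using Lrel_Lwords by (auto intro: Lrel.Lrefl Lrel.Lsym Lrel.Ltrans)

lemma Lrel_square: "1 \<le> j \<Longrightarrow> j < n \<Longrightarrow> ([j, j], []) \<in> Lrel n"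
  using Lrel.Lsq[of "[]" n "[]" j] by simp

lemma Lrel_rev_append:
  "w \<in> Lwords n \<Longrightarrow> (rev w @ w, []) \<in> Lrel n \<and> (w @ rev w, []) \<in> Lrel n"
proof (induction w)
  case Nil
  then show ?case by (auto intro: Lrel.Lrefl)
next
  case (Cons j w)
  then have IH: "(rev w @ w, []) \<in> Lrel n" "(w @ rev w, []) \<in> Lrel n"
    and j: "1 \<le> j" "j < n" and w: "w \<in> Lwords n" by auto
  have "(rev w @ [j, j] @ w, rev w @ w) \<in> Lrel n"
    using j w by (intro Lrel.Lsq) auto
  with IH(1) have "(rev (j # w) @ j # w, []) \<in> Lrel n"
    by (auto intro: Lrel.Ltrans)
  moreover have "([j] @ (w @ rev w) @ [j], [j] @ [] @ [j]) \<in> Lrel n"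
    using j by (intro Lrel_context IH(2)) auto
  with Lrel_square[OF j] have "((j # w) @ rev (j # w), []) \<in> Lrel n"
    by (auto intro: Lrel.Ltrans)
  ultimately show ?case by simp
qed

abbreviation word_class :: "nat \<Rightarrow> nat list \<Rightarrow> nat list set" where
  "word_class n w \<equiv> Lrel n `` {w}"

lemma word_class_eq_iff:
  "u \<in> Lwords n \<Longrightarrow> v \<in> Lwords n \<Longrightarrow> word_class n u = word_class n v \<longleftrightarrow> (u, v) \<in> Lrel n"
  by (rule eq_equiv_class_iff[OF equiv_Lrel])

lemma word_class_context:
  assumes "(u, v) \<in> Lrel n" "x \<in> Lwords n" "y \<in> Lwords n"
  shows "word_class n (x @ u @ y) = word_class n (x @ v @ y)"
  by (rule equiv_class_eq[OF equiv_Lrel Lrel_context[OF assms]])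

lemma word_class_cancel:
  assumes "w \<in> Lwords n" "x \<in> Lwords n" "y \<in> Lwords n"
  shows "word_class n (x @ (rev w @ w) @ y) = word_class n (x @ y)"
    and "word_class n (x @ (w @ rev w) @ y) = word_class n (x @ y)"
  using word_class_context[OF conjunct1[OF Lrel_rev_append] assms(2,3)]
    word_class_context[OF conjunct2[OF Lrel_rev_append] assms(2,3)] assms(1)
  by simp_all

lemma L_carrier: "carrier (L n) = Lwords n // Lrel n"
  by (simp add: L_def)

lemma L_one: "\<one>\<^bsub>L n\<^esub> = word_class n []"
  by (simp add: L_def)

lemma L_mult:
  assumes "u \<in> Lwords n" "v \<in> Lwords n"
  shows "word_class n u \<otimes>\<^bsub>L n\<^esub> word_class n v = word_class n (u @ v)"
proof -
  have "word_class n (a @ b) = word_class n (u @ v)"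
    if "a \<in> word_class n u" "b \<in> word_class n v" for a b
  proof -
    from that have "(a @ b, u @ v) \<in> Lrel n"
      by (blast intro: Lrel_append Lrel.Lsym)
    then show ?thesis
      using Lrel_Lwords by (metis word_class_eq_iff)
  qed
  then have "(\<Union>a\<in>word_class n u. \<Union>b\<in>word_class n v. word_class n (a @ b)) =
    (\<Union>a\<in>word_class n u. \<Union>b\<in>word_class n v. word_class n (u @ v))"
    by (intro SUP_cong refl) simp
  also have "\<dots> = word_class n (u @ v)"
    using assms equiv_class_self[OF equiv_Lrel, of u n] equiv_class_self[OF equiv_Lrel, of v n]
    by (simp only: UN_constant) auto
  finally show ?thesis
    unfolding L_def by simp
qed

lemma L_carrierE:
  assumes "A \<in> carrier (L n)"
  obtains a where "A = word_class n a" "a \<in> Lwords n"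
  using assms unfolding L_carrier by (erule quotientE)

lemma word_class_in_L: "a \<in> Lwords n \<Longrightarrow> word_class n a \<in> carrier (L n)"
  unfolding L_carrier by (rule quotientI)

lemma group_L: "group (L n)"
proof (rule groupI)
  fix x y
  assume "x \<in> carrier (L n)" "y \<in> carrier (L n)"
  then show "x \<otimes>\<^bsub>L n\<^esub> y \<in> carrier (L n)"
    by (elim L_carrierE) (simp add: L_mult word_class_in_L)
next
  show "\<one>\<^bsub>L n\<^esub> \<in> carrier (L n)"
    by (simp add: L_one word_class_in_L)
next
  fix x y z
  assume "x \<in> carrier (L n)" "y \<in> carrier (L n)" "z \<in> carrier (L n)"
  then show "x \<otimes>\<^bsub>L n\<^esub> y \<otimes>\<^bsub>L n\<^esub> z = x \<otimes>\<^bsub>L n\<^esub> (y \<otimes>\<^bsub>L n\<^esub> z)"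
    by (elim L_carrierE) (simp add: L_mult)
next
  fix x
  assume "x \<in> carrier (L n)"
  then show "\<one>\<^bsub>L n\<^esub> \<otimes>\<^bsub>L n\<^esub> x = x"
    by (elim L_carrierE) (simp add: L_mult L_one)
next
  fix x
  assume "x \<in> carrier (L n)"
  then obtain a where a: "x = word_class n a" "a \<in> Lwords n"
    by (elim L_carrierE)
  then have "word_class n (rev a) \<otimes>\<^bsub>L n\<^esub> x = \<one>\<^bsub>L n\<^esub>"
    using Lrel_rev_append[of a n] by (simp add: L_mult L_one word_class_eq_iff)
  with a show "\<exists>y\<in>carrier (L n). y \<otimes>\<^bsub>L n\<^esub> x = \<one>\<^bsub>L n\<^esub>"
    by (metis Lwords_rev word_class_in_L)
qed

abbreviation tr :: "nat \<Rightarrow> nat \<Rightarrow> nat" where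
  "tr j \<equiv> transpose j (Suc j)"

lemma comp_tr_tr [simp]: "\<sigma> \<circ> tr j \<circ> tr j = \<sigma>"
  by (simp add: o_assoc[symmetric])

lemma perm_of_word_Nil [simp]: "perm_of_word [] = id"
  by (simp add: perm_of_word_def)

lemma perm_of_word_Cons: "perm_of_word (j # w) = tr j \<circ> perm_of_word w"
  by (simp add: perm_of_word_def)

lemma perm_of_word_append: "perm_of_word (u @ v) = perm_of_word u \<circ> perm_of_word v"
  by (induction u) (auto simp: perm_of_word_Cons)

lemma tr_braid: "tr i (tr (Suc i) (tr i x)) = tr (Suc i) (tr i (tr (Suc i) x))"
  by (auto simp: transpose_def)

lemma Lrel_perm_of_word: "(u, v) \<in> Lrel n \<Longrightarrow> perm_of_word u = perm_of_word v"
  by (induction rule: Lrel.induct)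
    (auto simp: perm_of_word_append perm_of_word_Cons tr_braid fun_eq_iff)

lemma perm_of_word_rev:
  "perm_of_word w \<circ> perm_of_word (rev w) = id \<and> perm_of_word (rev w) \<circ> perm_of_word w = id"
  by (induction w) (auto simp: perm_of_word_append perm_of_word_Cons fun_eq_iff)

lemma bij_perm_of_word: "bij (perm_of_word w)"
  using perm_of_word_rev[of w] o_bij[of "perm_of_word (rev w)" "perm_of_word w"] by blast

lemma PL_carrier: "carrier (PL n) = PL_set n"
  by (simp add: PL_def)

lemma PL_mult: "monoid.mult (PL n) = monoid.mult (L n)"
  by (simp add: PL_def)

lemma PL_one: "\<one>\<^bsub>PL n\<^esub> = word_class n []"
  by (simp add: PL_def L_one)

lemma word_class_in_PL_iff:
  assumes "a \<in> Lwords n"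
  shows "word_class n a \<in> carrier (PL n) \<longleftrightarrow> perm_of_word a = id"
proof
  assume "word_class n a \<in> carrier (PL n)"
  then show "perm_of_word a = id"
    using equiv_class_self[OF equiv_Lrel assms] unfolding PL_carrier PL_set_def by blast
next
  assume "perm_of_word a = id"
  then have "\<forall>w\<in>word_class n a. perm_of_word w = id"
    using Lrel_perm_of_word[of a _ n] by simp
  then show "word_class n a \<in> carrier (PL n)"
    unfolding PL_carrier PL_set_def using word_class_in_L[OF assms] by blast
qed

lemma PL_carrierE:
  assumes "A \<in> carrier (PL n)"
  obtains a where "A = word_class n a" "a \<in> Lwords n" "perm_of_word a = id"
proof -
  from assms have "A \<in> carrier (L n)"
    by (simp add: PL_carrier PL_set_def)
  then obtain a where a: "A = word_class n a" "a \<in> Lwords n"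
    by (rule L_carrierE)
  with assms have "perm_of_word a = id"
    using word_class_in_PL_iff by blast
  with a show ?thesis
    by (rule that)
qed

lemma subgroup_PL_set: "subgroup (PL_set n) (L n)"
proof (rule group.subgroupI[OF group_L])
  show "PL_set n \<subseteq> carrier (L n)"
    by (auto simp: PL_set_def)
  show "PL_set n \<noteq> {}"
    using word_class_in_PL_iff[of "[]" n] by (auto simp: PL_carrier)
next
  fix A
  assume "A \<in> PL_set n"
  then obtain a where a: "A = word_class n a" "a \<in> Lwords n" "perm_of_word a = id"
    unfolding PL_carrier[symmetric] by (rule PL_carrierE)
  have "inv\<^bsub>L n\<^esub> A = word_class n (rev a)"
    using a Lrel_rev_append[of a n]
    by (intro group.inv_equality[OF group_L])
      (auto simp: L_mult word_class_eq_iff L_one word_class_in_L)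
  moreover have "perm_of_word (rev a) = id"
    using a perm_of_word_rev[of a] by simp
  ultimately show "inv\<^bsub>L n\<^esub> A \<in> PL_set n"
    using a word_class_in_PL_iff[of "rev a" n] by (simp add: PL_carrier)
next
  fix A B
  assume "A \<in> PL_set n" "B \<in> PL_set n"
  then obtain a b where "A = word_class n a" "a \<in> Lwords n" "perm_of_word a = id"
    "B = word_class n b" "b \<in> Lwords n" "perm_of_word b = id"
    unfolding PL_carrier[symmetric] by (metis PL_carrierE)
  then show "A \<otimes>\<^bsub>L n\<^esub> B \<in> PL_set n"
    using word_class_in_PL_iff[of "a @ b" n] by (simp add: L_mult perm_of_word_append PL_carrier)
qed

lemma group_PL: "group (PL n)"
  unfolding PL_def using subgroup.subgroup_is_group[OF subgroup_PL_set group_L] .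

section \<open>A Schreier transversal: bubble-sort words\<close>

definition descents :: "nat \<Rightarrow> (nat \<Rightarrow> nat) \<Rightarrow> nat set" where
  "descents n \<sigma> = {d. 1 \<le> d \<and> d < n \<and> \<sigma> (Suc d) < \<sigma> d}"

definition weight :: "nat \<Rightarrow> (nat \<Rightarrow> nat) \<Rightarrow> nat" where
  "weight n \<sigma> = (\<Sum>a\<in>{1..n}. a * \<sigma> a)"

lemma finite_descents: "finite (descents n \<sigma>)"
  by (rule finite_subset[of _ "{..<n}"]) (auto simp: descents_def)

lemma Max_descents_in: "descents n \<sigma> \<noteq> {} \<Longrightarrow> Max (descents n \<sigma>) \<in> descents n \<sigma>"
  using finite_descents by (rule Max_in)

lemma permutes_comp_tr: "\<sigma> permutes {1..n} \<Longrightarrow> 1 \<le> j \<Longrightarrow> j < n \<Longrightarrow> \<sigma> \<circ> tr j permutes {1..n}"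
  by (rule permutes_compose[OF permutes_swap_id]) auto

lemma weight_le_cube: "\<sigma> permutes {1..n} \<Longrightarrow> weight n \<sigma> \<le> n * n * n"
proof -
  assume p: "\<sigma> permutes {1..n}"
  have "a * \<sigma> a \<le> n * n" if "a \<in> {1..n}" for a
    using that permutes_in_image[OF p, of a] by (intro mult_mono) auto
  then have "weight n \<sigma> \<le> of_nat (card {1..n}) * (n * n)"
    unfolding weight_def by (rule sum_bounded_above)
  then show ?thesis
    by simp
qed

lemma weight_less_swap_descent:
  assumes "d \<in> descents n \<sigma>"
  shows "weight n \<sigma> < weight n (\<sigma> \<circ> tr d)"
proof -
  have d: "1 \<le> d" "d < n" "\<sigma> (Suc d) < \<sigma> d"
    using assms by (auto simp: descents_def)
  let ?A = "{1..n} - {d} - {Suc d}"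
  have split: "sum f {1..n} = f d + f (Suc d) + sum f ?A" for f :: "nat \<Rightarrow> nat"
  proof -
    have "sum f {1..n} = f d + sum f ({1..n} - {d})"
      using d by (intro sum.remove) auto
    also have "sum f ({1..n} - {d}) = f (Suc d) + sum f ?A"
      using d by (intro sum.remove) auto
    finally show ?thesis
      by simp
  qed
  have "(\<Sum>a\<in>?A. a * (\<sigma> \<circ> tr d) a) = (\<Sum>a\<in>?A. a * \<sigma> a)"
    by (rule sum.cong) (auto simp: transpose_def)
  moreover have "d * \<sigma> d + Suc d * \<sigma> (Suc d) < d * \<sigma> (Suc d) + Suc d * \<sigma> d"
    using d(3) by (simp add: algebra_simps)
  ultimately show ?thesis
    unfolding weight_def split[of "\<lambda>a. a * (\<sigma> \<circ> tr d) a"] split[of "\<lambda>a. a * \<sigma> a"] by simp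
qed

function sort_word :: "nat \<Rightarrow> (nat \<Rightarrow> nat) \<Rightarrow> nat list" where
  "sort_word n \<sigma> = (if \<sigma> permutes {1..n} \<and> descents n \<sigma> \<noteq> {}
     then sort_word n (\<sigma> \<circ> tr (Max (descents n \<sigma>))) @ [Max (descents n \<sigma>)] else [])"
  by auto
termination
proof (relation "measure (\<lambda>(n, \<sigma>). n * n * n - weight n \<sigma>)")
  fix n \<sigma>
  assume a: "\<sigma> permutes {1..n} \<and> descents n \<sigma> \<noteq> {}"
  let ?d = "Max (descents n \<sigma>)"
  have d: "?d \<in> descents n \<sigma>"
    using a Max_descents_in by blast
  then have "weight n (\<sigma> \<circ> tr ?d) \<le> n * n * n"
    using a by (intro weight_le_cube permutes_comp_tr) (auto simp: descents_def)
  with weight_less_swap_descent[OF d]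
  show "((n, \<sigma> \<circ> tr ?d), n, \<sigma>) \<in> measure (\<lambda>(n, \<sigma>). n * n * n - weight n \<sigma>)"
    by simp
qed simp

declare sort_word.simps [simp del]

lemma permutes_no_descents_id:
  assumes p: "\<sigma> permutes {1..n}" and D: "descents n \<sigma> = {}"
  shows "\<sigma> = id"
proof
  fix a
  have inc: "\<sigma> d < \<sigma> (Suc d)" if "1 \<le> d" "d < n" for d
  proof -
    have "\<not> \<sigma> (Suc d) < \<sigma> d"
      using D that by (auto simp: descents_def)
    moreover have "\<sigma> d \<noteq> \<sigma> (Suc d)"
      using permutes_inj[OF p] by (simp add: inj_eq)
    ultimately show ?thesis
      by simp
  qed
  have up: "\<sigma> b + k \<le> \<sigma> (b + k)" if "1 \<le> b" "b + k \<le> n" for b k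
    using that
  proof (induction k)
    case (Suc k)
    then have "\<sigma> (b + k) < \<sigma> (Suc (b + k))"
      by (intro inc) auto
    with Suc show ?case
      by simp
  qed simp
  have rng: "\<sigma> x \<in> {1..n}" if "x \<in> {1..n}" for x
    using permutes_in_image[OF p] that by blast
  show "\<sigma> a = id a"
  proof (cases "a \<in> {1..n}")
    case False
    then show ?thesis
      using permutes_not_in[OF p] by simp
  next
    case True
    have "\<sigma> a + (n - a) \<le> \<sigma> n" "\<sigma> n \<le> n"
      using True up[of a "n - a"] rng[of n] by auto
    moreover have "\<sigma> 1 + (a - 1) \<le> \<sigma> a" "1 \<le> \<sigma> 1"
      using True up[of 1 "a - 1"] rng[of 1] by auto
    ultimately show ?thesis
      using True by auto
  qed
qed

lemma perm_of_sort_word: "\<sigma> permutes {1..n} \<Longrightarrow> perm_of_word (sort_word n \<sigma>) = \<sigma>"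
proof (induction n \<sigma> rule: sort_word.induct)
  case (1 n \<sigma>)
  show ?case
  proof (cases "descents n \<sigma> = {}")
    case True
    then show ?thesis
      using permutes_no_descents_id[OF 1(2) True] by (subst sort_word.simps) simp
  next
    case False
    let ?d = "Max (descents n \<sigma>)"
    have "1 \<le> ?d" "?d < n"
      using Max_descents_in[OF False] by (auto simp: descents_def)
    then have "perm_of_word (sort_word n (\<sigma> \<circ> tr ?d)) = \<sigma> \<circ> tr ?d"
      using 1 False permutes_comp_tr by blast
    then show ?thesis
      using 1(2) False by (subst sort_word.simps) (simp add: perm_of_word_append perm_of_word_Cons)
  qed
qed

lemma sort_word_Lwords [simp]: "sort_word n \<sigma> \<in> Lwords n"
proof (induction n \<sigma> rule: sort_word.induct)
  case (1 n \<sigma>)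
  show ?case
  proof (cases "\<sigma> permutes {1..n} \<and> descents n \<sigma> \<noteq> {}")
    case True
    then have "1 \<le> Max (descents n \<sigma>)" "Max (descents n \<sigma>) < n"
      using Max_descents_in by (auto simp: descents_def)
    moreover have "sort_word n (\<sigma> \<circ> tr (Max (descents n \<sigma>))) \<in> Lwords n"
      using 1 True by blast
    ultimately show ?thesis
      using True by (subst sort_word.simps) simp
  next
    case False
    then have "sort_word n \<sigma> = []"
      by (subst sort_word.simps) (simp only: if_False)
    then show ?thesis
      by simp
  qed
qed

lemma sort_word_id: "sort_word n id = []"
  by (subst sort_word.simps) (simp add: descents_def)

section \<open>Schreier generators of \<open>PL n\<close>\<close>

text \<open>Tree edges are those used by the transversal: \<open>sort_word n (\<rho> \<circ> tr j) = sort_word n \<rho> @ [j]\<close>.\<close>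

definition tree_edge :: "nat \<Rightarrow> (nat \<Rightarrow> nat) \<Rightarrow> nat \<Rightarrow> bool" where
  "tree_edge n \<rho> j \<longleftrightarrow> descents n (\<rho> \<circ> tr j) \<noteq> {} \<and> Max (descents n (\<rho> \<circ> tr j)) = j"

definition braid_reducible :: "nat \<Rightarrow> (nat \<Rightarrow> nat) \<Rightarrow> nat \<Rightarrow> bool" where
  "braid_reducible n \<sigma> j \<longleftrightarrow>
     Suc (Suc j) \<le> n \<and> \<sigma> (Suc (Suc j)) < \<sigma> j \<and> \<sigma> (Suc (Suc j)) < \<sigma> (Suc j)"

definition free_edges :: "nat \<Rightarrow> ((nat \<Rightarrow> nat) \<times> nat) set" where
  "free_edges n = {(\<rho>, j). \<rho> permutes {1..n} \<and> 1 \<le> j \<and> j < n \<and> \<rho> j < \<rho> (Suc j) \<and>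
     \<not> braid_reducible n \<rho> j \<and> \<not> tree_edge n \<rho> j}"

definition schreier_gen :: "nat \<Rightarrow> (nat \<Rightarrow> nat) \<Rightarrow> nat \<Rightarrow> nat list set" where
  "schreier_gen n \<sigma> j = word_class n (sort_word n \<sigma> @ [j] @ rev (sort_word n (\<sigma> \<circ> tr j)))"

definition schreier_basis :: "nat \<Rightarrow> nat list set set" where
  "schreier_basis n = (\<lambda>(\<rho>, j). schreier_gen n \<rho> j) ` free_edges n"

fun schreier_prod :: "nat \<Rightarrow> (nat \<Rightarrow> nat) \<Rightarrow> nat list \<Rightarrow> nat list set" where
  "schreier_prod n \<sigma> [] = \<one>\<^bsub>PL n\<^esub>"
| "schreier_prod n \<sigma> (j # w) = schreier_gen n \<sigma> j \<otimes>\<^bsub>PL n\<^esub> schreier_prod n (\<sigma> \<circ> tr j) w"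

lemma braid_reducible_swap: "braid_reducible n (\<sigma> \<circ> tr j) j = braid_reducible n \<sigma> j"
  by (auto simp: braid_reducible_def)

lemma tree_edge_not_braid_reducible: "tree_edge n \<rho> j \<Longrightarrow> \<not> braid_reducible n \<rho> j"
proof
  assume t: "tree_edge n \<rho> j" and b: "braid_reducible n \<rho> j"
  then have "Suc j \<in> descents n (\<rho> \<circ> tr j)"
    by (auto simp: descents_def braid_reducible_def)
  then have "Suc j \<le> Max (descents n (\<rho> \<circ> tr j))"
    using finite_descents by (rule Max_ge[rotated])
  with t show False
    by (simp add: tree_edge_def)
qed

lemma sort_word_tree_edge:
  assumes "\<rho> permutes {1..n}" "1 \<le> j" "j < n" "tree_edge n \<rho> j"
  shows "sort_word n (\<rho> \<circ> tr j) = sort_word n \<rho> @ [j]"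
  using assms permutes_comp_tr[OF assms(1-3)] unfolding tree_edge_def
  by (subst sort_word.simps) simp

lemma schreier_gen_in_PL:
  assumes "\<sigma> permutes {1..n}" "1 \<le> j" "j < n"
  shows "schreier_gen n \<sigma> j \<in> carrier (PL n)"
proof -
  have "\<sigma> \<circ> tr j \<circ> perm_of_word (rev (sort_word n (\<sigma> \<circ> tr j))) = id"
    using perm_of_word_rev[of "sort_word n (\<sigma> \<circ> tr j)"]
      perm_of_sort_word[OF permutes_comp_tr[OF assms]] by simp
  then have "perm_of_word (sort_word n \<sigma> @ [j] @ rev (sort_word n (\<sigma> \<circ> tr j))) = id"
    using perm_of_sort_word[OF assms(1)]
    by (simp add: perm_of_word_append perm_of_word_Cons o_assoc)
  then show ?thesis
    unfolding schreier_gen_def using assms by (simp add: word_class_in_PL_iff)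
qed

lemma schreier_basis_subset: "schreier_basis n \<subseteq> carrier (PL n)"
  unfolding schreier_basis_def free_edges_def using schreier_gen_in_PL by auto

lemma schreier_gen_swap:
  assumes "\<sigma> permutes {1..n}" "1 \<le> j" "j < n"
  shows "schreier_gen n (\<sigma> \<circ> tr j) j = inv\<^bsub>PL n\<^esub> (schreier_gen n \<sigma> j)"
proof -
  let ?a = "sort_word n \<sigma>" and ?b = "sort_word n (\<sigma> \<circ> tr j)"
  have "schreier_gen n (\<sigma> \<circ> tr j) j \<otimes>\<^bsub>PL n\<^esub> schreier_gen n \<sigma> j =
    word_class n (?b @ [j] @ (rev ?a @ ?a) @ [j] @ rev ?b)"
    unfolding schreier_gen_def PL_mult using assms by (simp add: L_mult)
  also have "\<dots> = word_class n (?b @ ([j] @ [j]) @ rev ?b)"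
    using word_class_cancel(1)[of ?a n "?b @ [j]" "[j] @ rev ?b"] assms by simp
  also have "\<dots> = word_class n (?b @ [] @ rev ?b)"
    using word_class_context[OF Lrel_square[OF assms(2,3)], of ?b "rev ?b"] by simp
  also have "\<dots> = \<one>\<^bsub>PL n\<^esub>"
    using word_class_cancel(2)[of ?b n "[]" "[]"] by (simp add: PL_one)
  finally show ?thesis
    using assms permutes_comp_tr[OF assms]
    by (intro group.inv_equality[OF group_PL, symmetric] schreier_gen_in_PL)
qed

lemma word_class_eq_schreier_prod:
  "\<sigma> permutes {1..n} \<Longrightarrow> w \<in> Lwords n \<Longrightarrow>
   word_class n (sort_word n \<sigma> @ w @ rev (sort_word n (\<sigma> \<circ> perm_of_word w))) = schreier_prod n \<sigma> w"
proof (induction w arbitrary: \<sigma>)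
  case Nil
  then show ?case
    using word_class_cancel(2)[of "sort_word n \<sigma>" n "[]" "[]"] by (simp add: PL_one)
next
  case (Cons j w)
  then have j: "1 \<le> j" "j < n" and w: "w \<in> Lwords n"
    by auto
  let ?a = "sort_word n \<sigma>" and ?b = "sort_word n (\<sigma> \<circ> tr j)"
    and ?c = "sort_word n (\<sigma> \<circ> tr j \<circ> perm_of_word w)"
  have "schreier_prod n \<sigma> (j # w) = schreier_gen n \<sigma> j \<otimes>\<^bsub>PL n\<^esub> word_class n (?b @ w @ rev ?c)"
    by (simp only: schreier_prod.simps Cons.IH[OF permutes_comp_tr[OF Cons.prems(1) j] w])
  also have "\<dots> = word_class n ((?a @ [j]) @ (rev ?b @ ?b) @ (w @ rev ?c))"
    unfolding schreier_gen_def PL_mult using j w by (simp add: L_mult)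
  also have "\<dots> = word_class n (?a @ (j # w) @ rev ?c)"
    using word_class_cancel(1)[of ?b n "?a @ [j]" "w @ rev ?c"] j w by simp
  finally show ?case
    by (simp only: perm_of_word_Cons o_assoc)
qed

lemma schreier_prod_in_generate:
  assumes "\<And>\<sigma> j. \<sigma> permutes {1..n} \<Longrightarrow> 1 \<le> j \<Longrightarrow> j < n \<Longrightarrow> schreier_gen n \<sigma> j \<in> H"
    and "subgroup H (PL n)" "\<sigma> permutes {1..n}" "w \<in> Lwords n"
  shows "schreier_prod n \<sigma> w \<in> H"
  using assms(3,4)
proof (induction w arbitrary: \<sigma>)
  case Nil
  then show ?case
    using subgroup.one_closed[OF assms(2)] by simp
next
  case (Cons j w)
  then have "1 \<le> j" "j < n" "w \<in> Lwords n"
    by auto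
  with Cons have "schreier_gen n \<sigma> j \<in> H" "schreier_prod n (\<sigma> \<circ> tr j) w \<in> H"
    using assms(1) permutes_comp_tr by blast+
  then show ?case
    using subgroup.m_closed[OF assms(2)] by simp
qed

lemma Lrel_braid_conjugate:
  assumes "1 \<le> j" "Suc (Suc j) \<le> n"
  shows "([Suc j, j, Suc j, j, Suc j], [j]) \<in> Lrel n"
proof -
  have "([] @ [Suc j, j, Suc j] @ [j, Suc j], [] @ [j, Suc j, j] @ [j, Suc j]) \<in> Lrel n"
    using assms by (intro Lrel.Lbraid[THEN Lrel.Lsym]) auto
  moreover have "([j, Suc j] @ [j, j] @ [Suc j], [j, Suc j] @ [Suc j]) \<in> Lrel n"
    using assms by (intro Lrel.Lsq) auto
  moreover have "([j] @ [Suc j, Suc j] @ [], [j] @ []) \<in> Lrel n"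
    using assms by (intro Lrel.Lsq) auto
  ultimately show ?thesis
    by (auto intro: Lrel.Ltrans)
qed

lemma schreier_gen_braid_expansion:
  assumes "\<rho> permutes {1..n}" "1 \<le> j" "Suc (Suc j) \<le> n"
  shows "schreier_gen n \<rho> j = schreier_prod n \<rho> [Suc j, j, Suc j, j, Suc j]"
proof -
  let ?w = "[Suc j, j, Suc j, j, Suc j]"
  have rel: "(?w, [j]) \<in> Lrel n"
    using assms(2,3) by (rule Lrel_braid_conjugate)
  then have "perm_of_word ?w = tr j"
    using Lrel_perm_of_word[OF rel] by (simp only: perm_of_word_Cons perm_of_word_Nil comp_id)
  then have "schreier_gen n \<rho> j =
    word_class n (sort_word n \<rho> @ [j] @ rev (sort_word n (\<rho> \<circ> perm_of_word ?w)))"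
    unfolding schreier_gen_def by simp
  also have "\<dots> = word_class n (sort_word n \<rho> @ ?w @ rev (sort_word n (\<rho> \<circ> perm_of_word ?w)))"
    using word_class_context[OF Lrel.Lsym[OF rel]] by simp
  also have "\<dots> = schreier_prod n \<rho> ?w"
    using assms Lrel_Lwords[OF rel] by (intro word_class_eq_schreier_prod) auto
  finally show ?thesis .
qed

lemma schreier_gen_tree_edge:
  assumes "\<rho> permutes {1..n}" "1 \<le> j" "j < n" "tree_edge n \<rho> j"
  shows "schreier_gen n \<rho> j = \<one>\<^bsub>PL n\<^esub>"
proof -
  let ?a = "sort_word n \<rho>"
  have "schreier_gen n \<rho> j = word_class n (?a @ [j, j] @ rev ?a)"
    unfolding schreier_gen_def sort_word_tree_edge[OF assms] by simp
  also have "\<dots> = word_class n (?a @ [] @ rev ?a)"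
    using word_class_context[OF Lrel_square[OF assms(2,3)], of ?a "rev ?a"] by simp
  also have "\<dots> = \<one>\<^bsub>PL n\<^esub>"
    using word_class_cancel(2)[of ?a n "[]" "[]"] by (simp add: PL_one)
  finally show ?thesis .
qed

lemma schreier_gen_in_subgroup_by_forward:
  assumes H: "subgroup H (PL n)"
    and P_swap: "\<And>\<rho>. P (\<rho> \<circ> tr j) = P \<rho>"
    and forward: "\<And>\<rho>. \<rho> permutes {1..n} \<Longrightarrow> \<rho> j < \<rho> (Suc j) \<Longrightarrow> P \<rho> \<Longrightarrow> schreier_gen n \<rho> j \<in> H"
    and \<sigma>: "\<sigma> permutes {1..n}" "1 \<le> j" "j < n" "P \<sigma>"
  shows "schreier_gen n \<sigma> j \<in> H"
proof (cases "\<sigma> j < \<sigma> (Suc j)")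
  case True
  with forward \<sigma> show ?thesis
    by blast
next
  case False
  have \<sigma>': "\<sigma> \<circ> tr j permutes {1..n}"
    by (rule permutes_comp_tr[OF \<sigma>(1-3)])
  have "\<sigma> j \<noteq> \<sigma> (Suc j)"
    using permutes_inj[OF \<sigma>(1)] by (simp add: inj_eq)
  with False have "schreier_gen n (\<sigma> \<circ> tr j) j \<in> H"
    using \<sigma> \<sigma>' by (intro forward) (simp_all add: P_swap)
  then have "inv\<^bsub>PL n\<^esub> (schreier_gen n (\<sigma> \<circ> tr j) j) \<in> H"
    by (rule subgroup.m_inv_closed[OF H])
  then show ?thesis
    using schreier_gen_swap[OF \<sigma>' \<sigma>(2,3)] by simp
qed

lemma subgroup_generate_PL: "subgroup (generate (PL n) (schreier_basis n)) (PL n)"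
  by (rule group.generate_is_subgroup[OF group_PL schreier_basis_subset])

lemma schreier_gen_in_generate_not_braid_reducible:
  assumes "\<sigma> permutes {1..n}" "1 \<le> j" "j < n" "\<not> braid_reducible n \<sigma> j"
  shows "schreier_gen n \<sigma> j \<in> generate (PL n) (schreier_basis n)"
proof (rule schreier_gen_in_subgroup_by_forward[where P = "\<lambda>\<rho>. \<not> braid_reducible n \<rho> j",
      OF subgroup_generate_PL])
  fix \<rho>
  assume \<rho>: "\<rho> permutes {1..n}" "\<rho> j < \<rho> (Suc j)" "\<not> braid_reducible n \<rho> j"
  show "schreier_gen n \<rho> j \<in> generate (PL n) (schreier_basis n)"
  proof (cases "tree_edge n \<rho> j")
    case True
    then show ?thesis
      using schreier_gen_tree_edge \<rho>(1) assms(2,3) generate.one by metis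
  next
    case False
    then have "(\<rho>, j) \<in> free_edges n"
      using \<rho> assms(2,3) by (simp add: free_edges_def)
    then show ?thesis
      unfolding schreier_basis_def by (auto intro: generate.incl)
  qed
qed (use assms in \<open>simp_all add: braid_reducible_swap\<close>)

lemma schreier_gen_in_generate:
  "\<sigma> permutes {1..n} \<Longrightarrow> 1 \<le> j \<Longrightarrow> j < n \<Longrightarrow>
   schreier_gen n \<sigma> j \<in> generate (PL n) (schreier_basis n)"
proof (induction "n - j" arbitrary: j \<sigma> rule: less_induct)
  case less
  show ?case
  proof (cases "braid_reducible n \<sigma> j")
    case False
    with less.prems show ?thesis
      by (rule schreier_gen_in_generate_not_braid_reducible)
  next
    case True
    then have jn: "Suc (Suc j) \<le> n"
      by (simp add: braid_reducible_def)
    show ?thesis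
    proof (rule schreier_gen_in_subgroup_by_forward[where P = "\<lambda>\<rho>. braid_reducible n \<rho> j",
          OF subgroup_generate_PL])
      fix \<rho>
      assume \<rho>: "\<rho> permutes {1..n}" "\<rho> j < \<rho> (Suc j)" "braid_reducible n \<rho> j"
      let ?\<rho>1 = "\<rho> \<circ> tr (Suc j)"
      let ?\<rho>2 = "?\<rho>1 \<circ> tr j"
      let ?\<rho>3 = "?\<rho>2 \<circ> tr (Suc j)"
      let ?\<rho>4 = "?\<rho>3 \<circ> tr j"
      have step: "\<tau> \<circ> tr k permutes {1..n}" if "\<tau> permutes {1..n}" "k = j \<or> k = Suc j" for \<tau> k
        using permutes_comp_tr[OF that(1), of k] that(2) jn less.prems(2) by auto
      have perms: "?\<rho>1 permutes {1..n}" "?\<rho>2 permutes {1..n}"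
        "?\<rho>3 permutes {1..n}" "?\<rho>4 permutes {1..n}"
        using \<rho>(1) by (blast intro: step)+
      have "\<not> braid_reducible n ?\<rho>1 j" "\<not> braid_reducible n ?\<rho>3 j"
        using \<rho>(2,3) by (auto simp: braid_reducible_def transpose_def)
      then have "schreier_gen n ?\<rho>1 j \<in> generate (PL n) (schreier_basis n)"
        "schreier_gen n ?\<rho>3 j \<in> generate (PL n) (schreier_basis n)"
        using perms less.prems(2,3) by (auto intro: schreier_gen_in_generate_not_braid_reducible)
      moreover have "schreier_gen n \<tau> (Suc j) \<in> generate (PL n) (schreier_basis n)"
        if "\<tau> permutes {1..n}" for \<tau>
        using less.hyps[of "Suc j"] that jn less.prems(3) by auto
      ultimately show "schreier_gen n \<rho> j \<in> generate (PL n) (schreier_basis n)"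
        using schreier_gen_braid_expansion[OF \<rho>(1) less.prems(2) jn] \<rho>(1) perms
        by (simp add: generate.eng generate.one)
    qed (use less.prems True in \<open>simp_all add: braid_reducible_swap\<close>)
  qed
qed

lemma generate_schreier_basis: "generate (PL n) (schreier_basis n) = carrier (PL n)"
proof
  show "generate (PL n) (schreier_basis n) \<subseteq> carrier (PL n)"
    by (rule group.generate_incl[OF group_PL schreier_basis_subset])
next
  show "carrier (PL n) \<subseteq> generate (PL n) (schreier_basis n)"
  proof
    fix A
    assume "A \<in> carrier (PL n)"
    then obtain a where a: "A = word_class n a" "a \<in> Lwords n" "perm_of_word a = id"
      by (rule PL_carrierE)
    then have "A = schreier_prod n id a"
      using word_class_eq_schreier_prod[OF permutes_id a(2)] by (simp add: sort_word_id)
    also have "\<dots> \<in> generate (PL n) (schreier_basis n)"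
      using schreier_gen_in_generate a(2)
      by (intro schreier_prod_in_generate[OF _ subgroup_generate_PL permutes_id])
    finally show "A \<in> generate (PL n) (schreier_basis n)" .
  qed
qed

section \<open>Words in free groups\<close>

lemma freely_reduced_Cons:
  "freely_reduced (x # r) \<longleftrightarrow> freely_reduced r \<and>
     (case r of [] \<Rightarrow> True | y # _ \<Rightarrow> \<not> (fst x = fst y \<and> snd x \<noteq> snd y))"
  by (cases x; cases r) auto

lemma freely_reduced_tl: "freely_reduced (x # r) \<Longrightarrow> freely_reduced r"
  by (simp add: freely_reduced_Cons)

lemma freely_reduced_map:
  assumes "inj_on f (fst ` set ws)" "freely_reduced ws"
  shows "freely_reduced (map (\<lambda>(x, b). (f x, b)) ws)"
  using assms
proof (induction ws)
  case (Cons a ws)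
  then have IH: "freely_reduced (map (\<lambda>(x, b). (f x, b)) ws)"
    by (auto intro: inj_on_subset dest: freely_reduced_tl)
  show ?case
  proof (cases ws)
    case (Cons c ws')
    with Cons.prems have "\<not> (fst a = fst c \<and> snd a \<noteq> snd c)" "f (fst a) = f (fst c) \<longrightarrow> fst a = fst c"
      by (auto simp: freely_reduced_Cons dest: inj_onD)
    with IH Cons show ?thesis
      by (cases a; cases c) auto
  qed (cases a, simp)
qed simp

definition inv_word :: "('a \<times> bool) list \<Rightarrow> ('a \<times> bool) list" where
  "inv_word w = rev (map (\<lambda>(x, b). (x, \<not> b)) w)"

lemma inv_word_Nil [simp]: "inv_word [] = []"
  by (simp add: inv_word_def)

lemma inv_word_Cons: "inv_word ((x, b) # w) = inv_word w @ [(x, \<not> b)]"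
  by (simp add: inv_word_def)

lemma inv_word_append [simp]: "inv_word (u @ v) = inv_word v @ inv_word u"
  by (simp add: inv_word_def)

lemma inv_word_inv_word [simp]: "inv_word (inv_word w) = w"
  by (induction w) (auto simp: inv_word_def)

lemma (in group) eval_word_closed:
  "fst ` set ws \<subseteq> carrier G \<Longrightarrow> eval_word G ws \<in> carrier G"
  by (induction ws) (auto simp: eval_word_def)

lemma (in group_hom) hom_eval_word:
  "fst ` set ws \<subseteq> carrier G \<Longrightarrow> h (eval_word G ws) = eval_word H (map (\<lambda>(x, b). (h x, b)) ws)"
proof (induction ws)
  case Nil
  then show ?case
    by (simp add: eval_word_def)
next
  case (Cons a ws)
  then have "fst a \<in> carrier G" "eval_word G ws \<in> carrier G"
    using G.eval_word_closed by auto
  with Cons show ?case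
    by (cases a) (simp add: eval_word_def)
qed

lemma free_basis_nonabelian:
  fixes G (structure)
  assumes G: "group G" and S: "free_basis G S" and st: "s \<in> S" "t \<in> S" "s \<noteq> t"
  shows "nonabelian G"
proof -
  interpret group G by (rule G)
  have c: "s \<in> carrier G" "t \<in> carrier G"
    using S st by (auto simp: free_basis_def)
  have "eval_word G [(s, False), (t, False), (s, True), (t, True)] \<noteq> \<one>"
    using S st by (simp add: free_basis_def)
  then have "s \<otimes> t \<otimes> inv (t \<otimes> s) \<noteq> \<one>"
    using c by (simp add: eval_word_def m_assoc inv_mult_group)
  then have "s \<otimes> t \<noteq> t \<otimes> s"
    using c by auto
  with c show ?thesis
    by (auto simp: nonabelian_def)
qed

section \<open>A model of the free group: permutations of reduced words\<close>

text \<open>Van der Waerden's construction: a letter acts on reduced words by reduced concatenation.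
  Evaluating a reduced word at \<open>[]\<close> returns the word itself, which is what makes free bases
  detectable.\<close>

definition reduced_words :: "('a \<times> bool) list set" where
  "reduced_words = {r. freely_reduced r}"

definition cons_reduce :: "'a \<times> bool \<Rightarrow> ('a \<times> bool) list \<Rightarrow> ('a \<times> bool) list" where
  "cons_reduce x r = (case r of [] \<Rightarrow> [x]
     | y # r' \<Rightarrow> if fst y = fst x \<and> snd y \<noteq> snd x then r' else x # r)"

definition letter_perm :: "'a \<times> bool \<Rightarrow> ('a \<times> bool) list \<Rightarrow> ('a \<times> bool) list" where
  "letter_perm x = restrict (cons_reduce x) reduced_words"

abbreviation FG :: "(('a \<times> bool) list \<Rightarrow> ('a \<times> bool) list) monoid" where
  "FG \<equiv> BijGroup reduced_words"

definition eval_letters :: "('a \<times> bool) list \<Rightarrow> ('a \<times> bool) list \<Rightarrow> ('a \<times> bool) list" where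
  "eval_letters w = foldr (\<lambda>x g. letter_perm x \<otimes>\<^bsub>FG\<^esub> g) w \<one>\<^bsub>FG\<^esub>"

lemma group_FG: "group FG"
  by (rule group_BijGroup)

lemmas monoid_FG = group.is_monoid[OF group_FG]

lemma Nil_reduced_words [simp]: "[] \<in> reduced_words"
  by (simp add: reduced_words_def)

lemma cons_reduce_reduced:
  assumes "r \<in> reduced_words"
  shows "cons_reduce x r \<in> reduced_words"
proof (cases r)
  case (Cons y r')
  with assms have y: "freely_reduced (y # r')"
    by (simp add: reduced_words_def)
  show ?thesis
  proof (cases "fst y = fst x \<and> snd y \<noteq> snd x")
    case True
    with y Cons show ?thesis
      by (simp add: cons_reduce_def reduced_words_def freely_reduced_tl)
  next
    case False
    with y have "freely_reduced (x # y # r')"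
      by (auto simp: freely_reduced_Cons)
    with False Cons show ?thesis
      by (auto simp: cons_reduce_def reduced_words_def)
  qed
qed (simp add: cons_reduce_def reduced_words_def)

lemma cons_reduce_inverse:
  assumes "r \<in> reduced_words"
  shows "cons_reduce (fst x, \<not> snd x) (cons_reduce x r) = r"
proof (cases r)
  case Nil
  then show ?thesis
    by (simp add: cons_reduce_def)
next
  case (Cons y r')
  with assms have y: "freely_reduced (y # r')"
    by (simp add: reduced_words_def)
  show ?thesis
  proof (cases "fst y = fst x \<and> snd y \<noteq> snd x")
    case True
    have "cons_reduce x r = r'"
      using True by (simp add: cons_reduce_def Cons)
    moreover have "cons_reduce (fst x, \<not> snd x) r' = y # r'"
    proof (cases r')
      case Nil
      then show ?thesis
        using True by (cases y) (auto simp: cons_reduce_def)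
    next
      case (Cons z r'')
      have "\<not> (fst y = fst z \<and> snd y \<noteq> snd z)"
        using y Cons by (subst (asm) freely_reduced_Cons) simp
      then show ?thesis
        using True Cons by (cases y) (auto simp: cons_reduce_def)
    qed
    ultimately show ?thesis
      using Cons by simp
  next
    case False
    then show ?thesis
      by (auto simp: cons_reduce_def Cons)
  qed
qed

lemma letter_perm_in_FG: "letter_perm x \<in> carrier FG"
proof -
  have "bij_betw (cons_reduce x) reduced_words reduced_words"
  proof (rule bij_betw_byWitness)
    show "\<forall>r\<in>reduced_words. cons_reduce (fst x, \<not> snd x) (cons_reduce x r) = r"
      using cons_reduce_inverse by blast
    show "\<forall>r\<in>reduced_words. cons_reduce x (cons_reduce (fst x, \<not> snd x) r) = r"
      using cons_reduce_inverse[of _ "(fst x, \<not> snd x)"] by simp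
    show "cons_reduce x ` reduced_words \<subseteq> reduced_words"
      "cons_reduce (fst x, \<not> snd x) ` reduced_words \<subseteq> reduced_words"
      using cons_reduce_reduced by blast+
  qed
  then show ?thesis
    by (simp add: BijGroup_def Bij_def letter_perm_def)
qed

lemma FG_mult_apply:
  "g \<in> carrier FG \<Longrightarrow> h \<in> carrier FG \<Longrightarrow> r \<in> reduced_words \<Longrightarrow> (g \<otimes>\<^bsub>FG\<^esub> h) r = g (h r)"
  by (simp add: BijGroup_def compose_def)

lemma FG_one_apply: "r \<in> reduced_words \<Longrightarrow> \<one>\<^bsub>FG\<^esub> r = r"
  by (simp add: BijGroup_def)

lemma letter_perm_apply: "r \<in> reduced_words \<Longrightarrow> letter_perm x r = cons_reduce x r"
  by (simp add: letter_perm_def)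

lemma letter_perm_inv: "inv\<^bsub>FG\<^esub> (letter_perm x) = letter_perm (fst x, \<not> snd x)"
proof (rule group.inv_equality[OF group_FG _ letter_perm_in_FG letter_perm_in_FG])
  show "letter_perm (fst x, \<not> snd x) \<otimes>\<^bsub>FG\<^esub> letter_perm x = \<one>\<^bsub>FG\<^esub>"
  proof (rule extensionalityI[where A = reduced_words])
    show "letter_perm (fst x, \<not> snd x) \<otimes>\<^bsub>FG\<^esub> letter_perm x \<in> extensional reduced_words"
      using monoid.m_closed[OF monoid_FG letter_perm_in_FG letter_perm_in_FG]
      unfolding BijGroup_def Bij_def by (simp only: partial_object.simps) blast
    show "\<one>\<^bsub>FG\<^esub> \<in> extensional reduced_words"
      by (simp add: BijGroup_def)
  next
    fix r :: "('a \<times> bool) list"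
    assume "r \<in> reduced_words"
    then show "(letter_perm (fst x, \<not> snd x) \<otimes>\<^bsub>FG\<^esub> letter_perm x) r = \<one>\<^bsub>FG\<^esub> r"
      by (simp add: FG_mult_apply letter_perm_in_FG FG_one_apply letter_perm_apply
          cons_reduce_reduced cons_reduce_inverse)
  qed
qed

lemma eval_letters_Nil [simp]: "eval_letters [] = \<one>\<^bsub>FG\<^esub>"
  by (simp add: eval_letters_def)

lemma eval_letters_Cons: "eval_letters (x # w) = letter_perm x \<otimes>\<^bsub>FG\<^esub> eval_letters w"
  by (simp add: eval_letters_def)

lemma eval_letters_in_FG [simp]: "eval_letters w \<in> carrier FG"
  by (induction w)
    (simp_all add: eval_letters_Cons letter_perm_in_FG monoid.m_closed[OF monoid_FG]
      monoid.one_closed[OF monoid_FG])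

lemma eval_letters_append: "eval_letters (u @ v) = eval_letters u \<otimes>\<^bsub>FG\<^esub> eval_letters v"
  by (induction u)
    (simp_all add: eval_letters_Cons letter_perm_in_FG monoid.m_assoc[OF monoid_FG]
      monoid.l_one[OF monoid_FG])

lemma eval_letters_inv_word: "eval_letters (inv_word w) = inv\<^bsub>FG\<^esub> (eval_letters w)"
proof (induction w)
  case (Cons x w)
  interpret group FG by (rule group_FG)
  have "eval_letters (inv_word (x # w)) = inv\<^bsub>FG\<^esub> (eval_letters w) \<otimes>\<^bsub>FG\<^esub> inv\<^bsub>FG\<^esub> (letter_perm x)"
    using Cons by (cases x) (simp add: inv_word_Cons eval_letters_append eval_letters_Cons
        letter_perm_in_FG letter_perm_inv)
  then show ?case
    by (simp add: eval_letters_Cons inv_mult_group letter_perm_in_FG)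
qed (simp add: monoid.inv_one[OF monoid_FG])

lemma eval_letters_reduced: "freely_reduced w \<Longrightarrow> eval_letters w [] = w"
proof (induction w)
  case (Cons x w)
  then have "eval_letters (x # w) [] = letter_perm x w"
    by (simp add: eval_letters_Cons FG_mult_apply letter_perm_in_FG freely_reduced_tl)
  also have "\<dots> = x # w"
    using Cons.prems by (cases w) (auto simp: letter_perm_def reduced_words_def cons_reduce_def
        freely_reduced_Cons dest: freely_reduced_tl)
  finally show ?case .
qed (simp add: FG_one_apply)

lemma eval_word_letter_perm:
  "eval_word FG (map (\<lambda>(x, b). (letter_perm (x, False), b)) ws) = eval_letters ws"
  by (induction ws) (auto simp: eval_word_def eval_letters_Cons letter_perm_inv)

section \<open>Reidemeister rewriting\<close>

type_synonym edge = "(nat \<Rightarrow> nat) \<times> nat"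

definition oriented ::
  "((nat \<Rightarrow> nat) \<Rightarrow> nat \<Rightarrow> ('a \<times> bool) list) \<Rightarrow> (nat \<Rightarrow> nat) \<Rightarrow> nat \<Rightarrow> ('a \<times> bool) list"
where
  "oriented f \<sigma> j = (if \<sigma> (Suc j) < \<sigma> j then inv_word (f (\<sigma> \<circ> tr j) j) else f \<sigma> j)"

definition forward_letter :: "nat \<Rightarrow> (nat \<Rightarrow> nat) \<Rightarrow> nat \<Rightarrow> (edge \<times> bool) list" where
  "forward_letter n \<rho> j = (if tree_edge n \<rho> j then [] else [((\<rho>, j), False)])"

text \<open>Backward edges are rewritten as inverses of forward ones; a braid-reducible forward edge
  is rewritten along the five-letter path of \<open>Lrel_braid_conjugate\<close>, mirroring
  \<open>schreier_gen_braid_expansion\<close>.  The two edges of index \<open>j\<close> on that path are never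
  braid-reducible, so they are rewritten directly, which keeps the recursion well-founded.\<close>

function edge_word :: "nat \<Rightarrow> (nat \<Rightarrow> nat) \<Rightarrow> nat \<Rightarrow> (edge \<times> bool) list" where
  "edge_word n \<sigma> j =
    (if \<sigma> (Suc j) < \<sigma> j then inv_word (edge_word n (\<sigma> \<circ> tr j) j)
     else if braid_reducible n \<sigma> j then
       edge_word n \<sigma> (Suc j) @ oriented (forward_letter n) (\<sigma> \<circ> tr (Suc j)) j @
       edge_word n (\<sigma> \<circ> tr (Suc j) \<circ> tr j) (Suc j) @
       oriented (forward_letter n) (\<sigma> \<circ> tr (Suc j) \<circ> tr j \<circ> tr (Suc j)) j @
       edge_word n (\<sigma> \<circ> tr (Suc j) \<circ> tr j \<circ> tr (Suc j) \<circ> tr j) (Suc j)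
     else forward_letter n \<sigma> j)"
  by auto
termination
  by (relation "measures [\<lambda>(n, \<sigma>, j). n - j, \<lambda>(n, \<sigma>, j). if \<sigma> (Suc j) < \<sigma> j then 1 else 0]")
    (auto simp: braid_reducible_def)

declare edge_word.simps [simp del]

fun rewrite_path :: "nat \<Rightarrow> (nat \<Rightarrow> nat) \<Rightarrow> nat list \<Rightarrow> (edge \<times> bool) list" where
  "rewrite_path n \<sigma> [] = []"
| "rewrite_path n \<sigma> (j # w) = edge_word n \<sigma> j @ rewrite_path n (\<sigma> \<circ> tr j) w"

lemma inj_Suc_neq: "inj \<sigma> \<Longrightarrow> \<sigma> j \<noteq> \<sigma> (Suc j)"
  by (metis injD n_not_Suc_n)

lemma inj_comp_tr: "inj \<sigma> \<Longrightarrow> inj (\<sigma> \<circ> tr j)"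
  by (simp add: inj_compose)

lemma edge_word_swap:
  assumes "\<sigma> j \<noteq> \<sigma> (Suc j)"
  shows "edge_word n (\<sigma> \<circ> tr j) j = inv_word (edge_word n \<sigma> j)"
proof (cases "\<sigma> (Suc j) < \<sigma> j")
  case True
  then show ?thesis
    by (subst (2) edge_word.simps) simp
next
  case False
  with assms have "(\<sigma> \<circ> tr j) (Suc j) < (\<sigma> \<circ> tr j) j"
    by simp
  then show ?thesis
    by (subst edge_word.simps) simp
qed

lemma edge_word_not_braid_reducible:
  "\<not> braid_reducible n \<sigma> j \<Longrightarrow> edge_word n \<sigma> j = oriented (forward_letter n) \<sigma> j"
  by (subst edge_word.simps, subst edge_word.simps)
    (auto simp: oriented_def braid_reducible_swap)

lemma edge_word_braid_reducible:
  assumes "\<rho> j < \<rho> (Suc j)" "braid_reducible n \<rho> j"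
  shows "edge_word n \<rho> j = rewrite_path n \<rho> [Suc j, j, Suc j, j, Suc j]"
proof -
  have "\<not> braid_reducible n (\<rho> \<circ> tr (Suc j)) j"
    "\<not> braid_reducible n (\<rho> \<circ> tr (Suc j) \<circ> tr j \<circ> tr (Suc j)) j"
    using assms by (auto simp: braid_reducible_def transpose_def)
  with assms show ?thesis
    by (subst edge_word.simps) (simp add: edge_word_not_braid_reducible)
qed

lemma rewrite_path_append:
  "rewrite_path n \<sigma> (u @ v) = rewrite_path n \<sigma> u @ rewrite_path n (\<sigma> \<circ> perm_of_word u) v"
  by (induction u arbitrary: \<sigma>) (auto simp: perm_of_word_Cons o_assoc)

lemma rewrite_path_rev:
  "inj \<sigma> \<Longrightarrow> rewrite_path n (\<sigma> \<circ> perm_of_word w) (rev w) = inv_word (rewrite_path n \<sigma> w)"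
proof (induction w arbitrary: \<sigma>)
  case (Cons j w)
  have "\<sigma> \<circ> perm_of_word (j # w) \<circ> perm_of_word (rev w) = \<sigma> \<circ> tr j"
    using perm_of_word_rev[of w] by (simp add: perm_of_word_Cons o_assoc[symmetric])
  then have "rewrite_path n (\<sigma> \<circ> perm_of_word (j # w)) (rev (j # w)) =
    rewrite_path n (\<sigma> \<circ> tr j \<circ> perm_of_word w) (rev w) @ rewrite_path n (\<sigma> \<circ> tr j) [j]"
    by (simp add: rewrite_path_append) (simp add: perm_of_word_Cons o_assoc)
  also have "\<dots> = inv_word (rewrite_path n (\<sigma> \<circ> tr j) w) @ inv_word (edge_word n \<sigma> j)"
    using Cons.prems
    by (simp only: Cons.IH inj_comp_tr edge_word_swap[OF inj_Suc_neq[OF Cons.prems, of j]]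
        rewrite_path.simps append_Nil2)
  finally show ?case
    by (simp only: rev.simps rewrite_path.simps inv_word_append)
qed simp

definition edge_value ::
  "nat \<Rightarrow> (nat \<Rightarrow> nat) \<Rightarrow> nat \<Rightarrow> (edge \<times> bool) list \<Rightarrow> (edge \<times> bool) list"
where
  "edge_value n \<sigma> j = eval_letters (edge_word n \<sigma> j)"

definition path_value ::
  "nat \<Rightarrow> (nat \<Rightarrow> nat) \<Rightarrow> nat list \<Rightarrow> (edge \<times> bool) list \<Rightarrow> (edge \<times> bool) list"
where
  "path_value n \<sigma> w = eval_letters (rewrite_path n \<sigma> w)"

lemma edge_value_in_FG [simp]: "edge_value n \<sigma> j \<in> carrier FG"
  by (simp add: edge_value_def)

lemma path_value_in_FG [simp]: "path_value n \<sigma> w \<in> carrier FG"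
  by (simp add: path_value_def)

lemma path_value_append:
  "path_value n \<sigma> (u @ v) = path_value n \<sigma> u \<otimes>\<^bsub>FG\<^esub> path_value n (\<sigma> \<circ> perm_of_word u) v"
  by (simp add: path_value_def rewrite_path_append eval_letters_append)

lemma path_value_three:
  "path_value n \<sigma> [a, b, c] =
   edge_value n \<sigma> a \<otimes>\<^bsub>FG\<^esub> (edge_value n (\<sigma> \<circ> tr a) b \<otimes>\<^bsub>FG\<^esub> edge_value n (\<sigma> \<circ> tr a \<circ> tr b) c)"
  by (simp add: path_value_def edge_value_def eval_letters_append monoid.r_one[OF monoid_FG])

lemma edge_value_swap: "inj \<sigma> \<Longrightarrow> edge_value n (\<sigma> \<circ> tr j) j = inv\<^bsub>FG\<^esub> (edge_value n \<sigma> j)"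
  by (simp add: edge_value_def edge_word_swap inj_Suc_neq eval_letters_inv_word)

lemma (in group) hexagon_rotate:
  assumes "a \<in> carrier G" "b \<in> carrier G" "c \<in> carrier G"
    and "d \<in> carrier G" "e \<in> carrier G" "f \<in> carrier G"
    and "a \<otimes> (b \<otimes> c) = d \<otimes> (e \<otimes> f)"
  shows "inv a \<otimes> (d \<otimes> e) = b \<otimes> (c \<otimes> inv f)"
proof -
  have "b \<otimes> c = inv a \<otimes> (d \<otimes> (e \<otimes> f))"
    using assms by (metis inv_solve_left m_closed)
  then have "b \<otimes> (c \<otimes> inv f) = inv a \<otimes> (d \<otimes> (e \<otimes> f)) \<otimes> inv f"
    using assms by (simp add: m_assoc[symmetric])
  also have "\<dots> = inv a \<otimes> (d \<otimes> e)"
    using assms by (simp add: m_assoc)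
  finally show ?thesis
    by simp
qed

definition hexagon :: "nat \<Rightarrow> (nat \<Rightarrow> nat) \<Rightarrow> nat \<Rightarrow> bool" where
  "hexagon n \<sigma> i \<longleftrightarrow> path_value n \<sigma> [i, Suc i, i] = path_value n \<sigma> [Suc i, i, Suc i]"

lemma comp_tr_braid: "\<sigma> \<circ> tr i \<circ> tr (Suc i) \<circ> tr i = \<sigma> \<circ> tr (Suc i) \<circ> tr i \<circ> tr (Suc i)"
  using tr_braid[of i] by (simp add: fun_eq_iff)

lemma hexagon_swap_first: "inj \<sigma> \<Longrightarrow> hexagon n \<sigma> i \<Longrightarrow> hexagon n (\<sigma> \<circ> tr i) i"
proof -
  assume inj: "inj \<sigma>" and hx: "hexagon n \<sigma> i"
  let ?a = "edge_value n \<sigma> i" and ?b = "edge_value n (\<sigma> \<circ> tr i) (Suc i)"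
    and ?c = "edge_value n (\<sigma> \<circ> tr i \<circ> tr (Suc i)) i"
  let ?d = "edge_value n \<sigma> (Suc i)" and ?e = "edge_value n (\<sigma> \<circ> tr (Suc i)) i"
    and ?f = "edge_value n (\<sigma> \<circ> tr (Suc i) \<circ> tr i) (Suc i)"
  have h: "?a \<otimes>\<^bsub>FG\<^esub> (?b \<otimes>\<^bsub>FG\<^esub> ?c) = ?d \<otimes>\<^bsub>FG\<^esub> (?e \<otimes>\<^bsub>FG\<^esub> ?f)"
    using hx by (simp add: hexagon_def path_value_three)
  have 1: "edge_value n (\<sigma> \<circ> tr i) i = inv\<^bsub>FG\<^esub> ?a"
    by (rule edge_value_swap[OF inj])
  have 2: "edge_value n (\<sigma> \<circ> tr i \<circ> tr (Suc i) \<circ> tr i) (Suc i) = inv\<^bsub>FG\<^esub> ?f"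
    unfolding comp_tr_braid by (intro edge_value_swap inj_comp_tr inj)
  show ?thesis
    unfolding hexagon_def path_value_three comp_tr_tr 1 2
    by (rule group.hexagon_rotate[OF group_FG _ _ _ _ _ _ h]) simp_all
qed

lemma hexagon_swap_second: "inj \<sigma> \<Longrightarrow> hexagon n \<sigma> i \<Longrightarrow> hexagon n (\<sigma> \<circ> tr (Suc i)) i"
proof -
  assume inj: "inj \<sigma>" and hx: "hexagon n \<sigma> i"
  let ?a = "edge_value n \<sigma> i" and ?b = "edge_value n (\<sigma> \<circ> tr i) (Suc i)"
    and ?c = "edge_value n (\<sigma> \<circ> tr i \<circ> tr (Suc i)) i"
  let ?d = "edge_value n \<sigma> (Suc i)" and ?e = "edge_value n (\<sigma> \<circ> tr (Suc i)) i"
    and ?f = "edge_value n (\<sigma> \<circ> tr (Suc i) \<circ> tr i) (Suc i)"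
  have h: "?d \<otimes>\<^bsub>FG\<^esub> (?e \<otimes>\<^bsub>FG\<^esub> ?f) = ?a \<otimes>\<^bsub>FG\<^esub> (?b \<otimes>\<^bsub>FG\<^esub> ?c)"
    using hx by (simp add: hexagon_def path_value_three)
  have 1: "edge_value n (\<sigma> \<circ> tr (Suc i)) (Suc i) = inv\<^bsub>FG\<^esub> ?d"
    by (rule edge_value_swap[OF inj])
  have 2: "edge_value n (\<sigma> \<circ> tr (Suc i) \<circ> tr i \<circ> tr (Suc i)) i = inv\<^bsub>FG\<^esub> ?c"
    unfolding comp_tr_braid[symmetric] by (intro edge_value_swap inj_comp_tr inj)
  have "inv\<^bsub>FG\<^esub> ?d \<otimes>\<^bsub>FG\<^esub> (?a \<otimes>\<^bsub>FG\<^esub> ?b) = ?e \<otimes>\<^bsub>FG\<^esub> (?f \<otimes>\<^bsub>FG\<^esub> inv\<^bsub>FG\<^esub> ?c)"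
    by (rule group.hexagon_rotate[OF group_FG _ _ _ _ _ _ h]) simp_all
  then show ?thesis
    unfolding hexagon_def path_value_three comp_tr_tr 1 2 by simp
qed

lemma hexagon_swap_first_iff: "inj \<sigma> \<Longrightarrow> hexagon n (\<sigma> \<circ> tr i) i \<longleftrightarrow> hexagon n \<sigma> i"
  using hexagon_swap_first[of \<sigma> n i] hexagon_swap_first[of "\<sigma> \<circ> tr i" n i]
  by (auto simp: inj_comp_tr)

lemma hexagon_swap_second_iff: "inj \<sigma> \<Longrightarrow> hexagon n (\<sigma> \<circ> tr (Suc i)) i \<longleftrightarrow> hexagon n \<sigma> i"
  using hexagon_swap_second[of \<sigma> n i] hexagon_swap_second[of "\<sigma> \<circ> tr (Suc i)" n i]
  by (auto simp: inj_comp_tr)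

lemma hexagon_braid_reducible:
  assumes inj: "inj \<rho>" and "\<rho> i < \<rho> (Suc i)" "braid_reducible n \<rho> i"
  shows "hexagon n \<rho> i"
proof -
  interpret group FG by (rule group_FG)
  let ?r = "\<rho> \<circ> tr (Suc i) \<circ> tr i \<circ> tr (Suc i)"
  have r: "\<rho> \<circ> perm_of_word [Suc i, i, Suc i] = ?r" "?r \<circ> perm_of_word [i, Suc i] = \<rho> \<circ> tr i"
    by (auto simp: fun_eq_iff perm_of_word_Cons transpose_def)
  have "edge_word n \<rho> i = rewrite_path n \<rho> ([Suc i, i, Suc i] @ [i, Suc i])"
    using assms(2,3) by (simp add: edge_word_braid_reducible)
  then have "edge_value n \<rho> i = path_value n \<rho> [Suc i, i, Suc i] \<otimes>\<^bsub>FG\<^esub> path_value n ?r [i, Suc i]"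
    unfolding edge_value_def path_value_append[symmetric] r(1)[symmetric]
    by (simp add: path_value_def)
  moreover have "rewrite_path n (?r \<circ> perm_of_word [i, Suc i]) (rev [i, Suc i]) =
    inv_word (rewrite_path n ?r [i, Suc i])"
    by (intro rewrite_path_rev inj_comp_tr inj)
  then have "rewrite_path n (\<rho> \<circ> tr i) [Suc i, i] = inv_word (rewrite_path n ?r [i, Suc i])"
    by (simp only: r(2) rev.simps append.simps)
  then have "path_value n (\<rho> \<circ> tr i) [Suc i, i] = inv\<^bsub>FG\<^esub> path_value n ?r [i, Suc i]"
    unfolding path_value_def eval_letters_inv_word[symmetric]
    by (rule arg_cong[where f = eval_letters])
  moreover have "path_value n \<rho> [i, Suc i, i] =
    edge_value n \<rho> i \<otimes>\<^bsub>FG\<^esub> path_value n (\<rho> \<circ> tr i) [Suc i, i]"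
    by (simp add: path_value_def edge_value_def eval_letters_append)
  ultimately show ?thesis
    by (simp add: hexagon_def m_assoc)
qed

lemma hexagon_holds:
  assumes inj: "inj \<sigma>" and n: "Suc (Suc i) \<le> n"
  shows "hexagon n \<sigma> i"
proof -
  have E: "hexagon n \<rho> i" if "inj \<rho>" "\<rho> i < \<rho> (Suc i)" "\<rho> (Suc (Suc i)) < \<rho> i" for \<rho>
    using that n by (intro hexagon_braid_reducible) (auto simp: braid_reducible_def)
  have i1: "inj (\<sigma> \<circ> tr i)" "inj (\<sigma> \<circ> tr (Suc i))" "inj (\<sigma> \<circ> tr (Suc i) \<circ> tr i)"
    using inj by (simp_all add: inj_comp_tr)
  have "\<sigma> i \<noteq> \<sigma> (Suc i)" "\<sigma> i \<noteq> \<sigma> (Suc (Suc i))" "\<sigma> (Suc i) \<noteq> \<sigma> (Suc (Suc i))"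
    using inj by (simp_all add: inj_eq)
  then consider "\<sigma> (Suc (Suc i)) < \<sigma> i \<and> \<sigma> i < \<sigma> (Suc i)"
    | "\<sigma> (Suc (Suc i)) < \<sigma> (Suc i) \<and> \<sigma> (Suc i) < \<sigma> i"
    | "\<sigma> (Suc i) < \<sigma> i \<and> \<sigma> i < \<sigma> (Suc (Suc i))"
    | "\<sigma> i < \<sigma> (Suc i) \<and> \<sigma> (Suc i) < \<sigma> (Suc (Suc i))"
    | "\<sigma> (Suc i) < \<sigma> (Suc (Suc i)) \<and> \<sigma> (Suc (Suc i)) < \<sigma> i"
    | "\<sigma> i < \<sigma> (Suc (Suc i)) \<and> \<sigma> (Suc (Suc i)) < \<sigma> (Suc i)"
    by linarith
  then show ?thesis
  proof cases
    case 1
    then show ?thesis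
      using E[OF inj] by simp
  next
    case 2
    then have "hexagon n (\<sigma> \<circ> tr i) i"
      by (intro E i1) simp_all
    then show ?thesis
      using hexagon_swap_first_iff[OF inj] by simp
  next
    case 3
    then have "hexagon n (\<sigma> \<circ> tr (Suc i)) i"
      by (intro E i1) simp_all
    then show ?thesis
      using hexagon_swap_second_iff[OF inj] by simp
  next
    case 4
    then have "hexagon n (\<sigma> \<circ> tr i \<circ> tr (Suc i)) i"
      by (intro E inj_comp_tr i1) simp_all
    then show ?thesis
      using hexagon_swap_first_iff[OF inj] hexagon_swap_second_iff[OF i1(1)] by simp
  next
    case 5
    then have "hexagon n (\<sigma> \<circ> tr (Suc i) \<circ> tr i) i"
      by (intro E i1) simp_all
    then show ?thesis
      using hexagon_swap_second_iff[OF inj] hexagon_swap_first_iff[OF i1(2)] by simp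
  next
    case 6
    then have "hexagon n (\<sigma> \<circ> tr (Suc i) \<circ> tr i \<circ> tr (Suc i)) i"
      by (intro E inj_comp_tr i1) simp_all
    then show ?thesis
      using hexagon_swap_second_iff[OF inj] hexagon_swap_first_iff[OF i1(2)]
        hexagon_swap_second_iff[OF i1(3)] by simp
  qed
qed

lemma path_value_square: "inj \<sigma> \<Longrightarrow> path_value n \<sigma> [j, j] = \<one>\<^bsub>FG\<^esub>"
  using edge_value_swap[of \<sigma> n j]
  by (simp add: path_value_def edge_value_def eval_letters_append monoid.r_one[OF monoid_FG]
      group.r_inv[OF group_FG])

lemma path_value_Lrel: "(u, v) \<in> Lrel n \<Longrightarrow> inj \<sigma> \<Longrightarrow> path_value n \<sigma> u = path_value n \<sigma> v"
proof (induction arbitrary: \<sigma> rule: Lrel.induct)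
  case (Lsq u v j)
  let ?s = "\<sigma> \<circ> perm_of_word u"
  have "path_value n ?s [j, j] = \<one>\<^bsub>FG\<^esub>"
    using Lsq bij_perm_of_word by (intro path_value_square inj_compose) (auto intro: bij_is_inj)
  moreover have "?s \<circ> perm_of_word [j, j] = ?s"
    by (simp add: perm_of_word_Cons)
  ultimately have "path_value n ?s [j, j] \<otimes>\<^bsub>FG\<^esub> path_value n (?s \<circ> perm_of_word [j, j]) v =
    path_value n ?s v"
    by (simp add: monoid.l_one[OF monoid_FG])
  then show ?case
    by (simp only: path_value_append)
next
  case (Lbraid u v i)
  let ?s = "\<sigma> \<circ> perm_of_word u"
  have "hexagon n ?s i"
    using Lbraid bij_perm_of_word by (intro hexagon_holds inj_compose) (auto intro: bij_is_inj)
  moreover have "perm_of_word [i, Suc i, i] = perm_of_word [Suc i, i, Suc i]"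
    by (simp add: perm_of_word_Cons fun_eq_iff tr_braid)
  ultimately show ?case
    by (simp only: path_value_append hexagon_def o_assoc[symmetric])
qed auto

definition rewrite_hom :: "nat \<Rightarrow> nat list set \<Rightarrow> (edge \<times> bool) list \<Rightarrow> (edge \<times> bool) list" where
  "rewrite_hom n A = path_value n id (SOME w. w \<in> A)"

lemma rewrite_hom_word_class: "a \<in> Lwords n \<Longrightarrow> rewrite_hom n (word_class n a) = path_value n id a"
proof -
  assume a: "a \<in> Lwords n"
  then have "(SOME w. w \<in> word_class n a) \<in> word_class n a"
    using equiv_class_self[OF equiv_Lrel] by (metis someI)
  then show ?thesis
    unfolding rewrite_hom_def using path_value_Lrel Lrel.Lsym
    by (metis Image_singleton_iff inj_on_id)
qed

lemma group_hom_rewrite_hom: "group_hom (PL n) FG (rewrite_hom n)"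
proof -
  have "rewrite_hom n \<in> hom (PL n) FG"
  proof (rule homI)
    fix A
    assume "A \<in> carrier (PL n)"
    then show "rewrite_hom n A \<in> carrier FG"
      by (auto simp: rewrite_hom_word_class elim: PL_carrierE)
  next
    fix A B
    assume "A \<in> carrier (PL n)" "B \<in> carrier (PL n)"
    then obtain a b where "A = word_class n a" "a \<in> Lwords n" "perm_of_word a = id"
      "B = word_class n b" "b \<in> Lwords n"
      by (metis PL_carrierE)
    then show "rewrite_hom n (A \<otimes>\<^bsub>PL n\<^esub> B) = rewrite_hom n A \<otimes>\<^bsub>FG\<^esub> rewrite_hom n B"
      by (simp add: PL_mult L_mult rewrite_hom_word_class path_value_append)
  qed
  then show ?thesis
    by (simp add: group_hom_def group_hom_axioms_def group_PL group_FG)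
qed

lemma rewrite_path_sort_word: "\<sigma> permutes {1..n} \<Longrightarrow> rewrite_path n id (sort_word n \<sigma>) = []"
proof (induction n \<sigma> rule: sort_word.induct)
  case (1 n \<sigma>)
  show ?case
  proof (cases "descents n \<sigma> = {}")
    case True
    then show ?thesis
      by (subst sort_word.simps) simp
  next
    case False
    let ?d = "Max (descents n \<sigma>)"
    let ?r = "\<sigma> \<circ> tr ?d"
    have d: "1 \<le> ?d" "?d < n" "\<sigma> (Suc ?d) < \<sigma> ?d"
      using Max_descents_in[OF False] by (auto simp: descents_def)
    have r: "?r permutes {1..n}"
      using permutes_comp_tr[OF 1(2) d(1,2)] .
    have "tree_edge n ?r ?d"
      using False by (simp add: tree_edge_def)
    with d have "edge_word n ?r ?d = []"
      by (simp add: edge_word_not_braid_reducible tree_edge_not_braid_reducible oriented_def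
          forward_letter_def)
    moreover have "rewrite_path n id (sort_word n ?r) = []"
      using 1 False r by blast
    ultimately show ?thesis
      using 1(2) False perm_of_sort_word[OF r]
      by (subst sort_word.simps) (simp add: rewrite_path_append)
  qed
qed

lemma rewrite_hom_schreier_gen:
  assumes e: "(\<rho>, j) \<in> free_edges n"
  shows "rewrite_hom n (schreier_gen n \<rho> j) = letter_perm ((\<rho>, j), False)"
proof -
  from e have p: "\<rho> permutes {1..n}" "1 \<le> j" "j < n"
    by (auto simp: free_edges_def)
  have p': "\<rho> \<circ> tr j permutes {1..n}"
    using p by (rule permutes_comp_tr)
  let ?a = "sort_word n \<rho>" and ?b = "sort_word n (\<rho> \<circ> tr j)"
  have "rewrite_path n (\<rho> \<circ> tr j) (rev ?b) = inv_word (rewrite_path n id ?b)"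
    using rewrite_path_rev[of id n ?b] by (simp add: perm_of_sort_word[OF p'])
  then have "rewrite_path n (\<rho> \<circ> tr j) (rev ?b) = []"
    by (simp add: rewrite_path_sort_word[OF p'])
  moreover have "edge_word n \<rho> j = [((\<rho>, j), False)]"
    using e
    by (simp add: free_edges_def edge_word_not_braid_reducible oriented_def forward_letter_def)
  ultimately have "rewrite_path n id (?a @ [j] @ rev ?b) = [((\<rho>, j), False)]"
    by (simp add: rewrite_path_append rewrite_path_sort_word[OF p(1)] perm_of_sort_word[OF p(1)]
        perm_of_word_Cons)
  then show ?thesis
    using p unfolding schreier_gen_def
    by (simp add: rewrite_hom_word_class path_value_def eval_letters_Cons letter_perm_in_FG
        monoid.r_one[OF monoid_FG])
qed

lemma schreier_gen_inj_on_free_edges: "inj_on (\<lambda>(\<rho>, j). schreier_gen n \<rho> j) (free_edges n)"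
proof (rule inj_onI, clarify)
  fix \<rho> j \<rho>' j'
  assume e: "(\<rho>, j) \<in> free_edges n" "(\<rho>', j') \<in> free_edges n"
    and eq: "schreier_gen n \<rho> j = schreier_gen n \<rho>' j'"
  have "letter_perm ((\<rho>, j), False) [] = letter_perm ((\<rho>', j'), False) []"
    using eq rewrite_hom_schreier_gen[OF e(1)] rewrite_hom_schreier_gen[OF e(2)] by simp
  then show "\<rho> = \<rho>' \<and> j = j'"
    by (simp add: letter_perm_apply cons_reduce_def)
qed

definition free_edge_of :: "nat \<Rightarrow> nat list set \<Rightarrow> edge" where
  "free_edge_of n = the_inv_into (free_edges n) (\<lambda>(\<rho>, j). schreier_gen n \<rho> j)"

lemma rewrite_hom_schreier_basis:
  assumes "s \<in> schreier_basis n"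
  shows "rewrite_hom n s = letter_perm (free_edge_of n s, False)"
proof -
  from assms obtain \<rho> j where e: "(\<rho>, j) \<in> free_edges n" and s: "s = schreier_gen n \<rho> j"
    by (auto simp: schreier_basis_def)
  then have "free_edge_of n s = (\<rho>, j)"
    unfolding free_edge_of_def using the_inv_into_f_f[OF schreier_gen_inj_on_free_edges e] by simp
  with e s show ?thesis
    by (simp add: rewrite_hom_schreier_gen)
qed

lemma inj_on_free_edge_of: "inj_on (free_edge_of n) (schreier_basis n)"
  unfolding free_edge_of_def schreier_basis_def
  by (rule inj_on_the_inv_into[OF schreier_gen_inj_on_free_edges])

lemma free_basis_schreier_basis: "free_basis (PL n) (schreier_basis n)"
  unfolding free_basis_def
proof (intro conjI allI impI schreier_basis_subset generate_schreier_basis)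
  fix ws :: "(nat list set \<times> bool) list"
  assume ws: "ws \<noteq> [] \<and> fst ` set ws \<subseteq> schreier_basis n \<and> freely_reduced ws"
  interpret h: group_hom "PL n" FG "rewrite_hom n"
    by (rule group_hom_rewrite_hom)
  let ?es = "map (\<lambda>(s, b). (free_edge_of n s, b)) ws"
  have letters: "map (\<lambda>(s, b). (rewrite_hom n s, b)) ws =
    map (\<lambda>(x, b). (letter_perm (x, False), b)) ?es"
    using ws by (auto simp: rewrite_hom_schreier_basis)
  have "rewrite_hom n (eval_word (PL n) ws) =
    eval_word FG (map (\<lambda>(s, b). (rewrite_hom n s, b)) ws)"
    using ws schreier_basis_subset by (intro h.hom_eval_word) blast
  also have "\<dots> = eval_letters ?es"
    by (simp only: letters eval_word_letter_perm)
  finally have hom_value: "rewrite_hom n (eval_word (PL n) ws) = eval_letters ?es" .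
  have "freely_reduced ?es"
    using ws inj_on_free_edge_of by (intro freely_reduced_map) (auto intro: inj_on_subset)
  with hom_value have "rewrite_hom n (eval_word (PL n) ws) [] = ?es"
    by (simp add: eval_letters_reduced)
  moreover have "rewrite_hom n \<one>\<^bsub>PL n\<^esub> [] = []"
    by (simp add: FG_one_apply)
  ultimately show "eval_word (PL n) ws \<noteq> \<one>\<^bsub>PL n\<^esub>"
    using ws by auto
qed

lemma finite_schreier_basis: "finite (schreier_basis n)"
proof -
  have "free_edges n \<subseteq> {\<rho>. \<rho> permutes {1..n}} \<times> {..<n}"
    by (auto simp: free_edges_def)
  then have "finite (free_edges n)"
    by (rule finite_subset) (intro finite_cartesian_product finite_permutations; simp)
  then show ?thesis
    by (simp add: schreier_basis_def)
qed

lemma free_group_finite_rank_PL: "free_group_finite_rank (PL n)"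
  unfolding free_group_finite_rank_def
  using group_PL finite_schreier_basis free_basis_schreier_basis by blast

section \<open>Counting free edges\<close>

lemma free_edges_empty: "n \<le> 3 \<Longrightarrow> free_edges n = {}"
proof (rule ccontr)
  assume n: "n \<le> 3" and "free_edges n \<noteq> {}"
  then obtain \<rho> j where j: "1 \<le> j" "j < n" and fw: "\<rho> j < \<rho> (Suc j)"
    and nb: "\<not> braid_reducible n \<rho> j" and nt: "\<not> tree_edge n \<rho> j"
    by (auto simp: free_edges_def)
  let ?D = "descents n (\<rho> \<circ> tr j)"
  have jD: "j \<in> ?D"
    using j fw by (simp add: descents_def)
  then have M: "Max ?D \<in> ?D" "j \<le> Max ?D" "Max ?D \<noteq> j"
    using nt Max_descents_in[of n "\<rho> \<circ> tr j"] Max_ge[OF finite_descents]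
    by (auto simp: tree_edge_def)
  then have "Suc (Suc j) \<le> n"
    by (simp add: descents_def)
  with n j have j1: "j = 1" "n = 3"
    by auto
  with M have "Max ?D = 2"
    by (auto simp: descents_def)
  with M(1) j1 have "\<rho> 3 < \<rho> 1"
    by (simp add: descents_def transpose_def numeral_eq_Suc)
  with nb fw j1 show False
    by (simp add: braid_reducible_def numeral_eq_Suc)
qed

lemma two_free_edges:
  assumes "4 \<le> n"
  shows "(tr 3, 1) \<in> free_edges n" "(tr 1 \<circ> tr 2 \<circ> tr 3, 1) \<in> free_edges n"
proof -
  have "tr 1 permutes {1..n}" "tr 2 permutes {1..n}" "tr 3 permutes {1..n}"
    using assms by (auto intro!: permutes_swap_id)
  then have "tr 3 permutes {1..n}" "tr 1 \<circ> tr 2 \<circ> tr 3 permutes {1..n}"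
    by (simp_all add: permutes_compose)
  moreover have "3 \<in> descents n (tr 3 \<circ> tr 1)" "3 \<in> descents n (tr 1 \<circ> tr 2 \<circ> tr 3 \<circ> tr 1)"
    using assms by (simp_all add: descents_def transpose_def numeral_eq_Suc)
  then have "\<not> tree_edge n (tr 3) 1" "\<not> tree_edge n (tr 1 \<circ> tr 2 \<circ> tr 3) 1"
    using Max_ge[OF finite_descents] by (fastforce simp: tree_edge_def)+
  ultimately show "(tr 3, 1) \<in> free_edges n" "(tr 1 \<circ> tr 2 \<circ> tr 3, 1) \<in> free_edges n"
    using assms by (simp_all add: free_edges_def braid_reducible_def transpose_def numeral_eq_Suc)
qed

lemma carrier_PL_trivial: "n \<le> 3 \<Longrightarrow> carrier (PL n) = {\<one>\<^bsub>PL n\<^esub>}"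
  using generate_schreier_basis[of n] group.generate_empty[OF group_PL, of n] free_edges_empty
  by (simp add: schreier_basis_def)

lemma nonabelian_PL: "4 \<le> n \<Longrightarrow> nonabelian (PL n)"
proof -
  assume n: "4 \<le> n"
  have "tr 3 \<noteq> tr 1 \<circ> tr 2 \<circ> tr 3"
    by (auto simp: fun_eq_iff transpose_def dest!: spec[of _ 1])
  then have "schreier_gen n (tr 3) 1 \<noteq> schreier_gen n (tr 1 \<circ> tr 2 \<circ> tr 3) 1"
    using inj_onD[OF schreier_gen_inj_on_free_edges _ two_free_edges[OF n]] by auto
  moreover have "schreier_gen n (tr 3) 1 \<in> schreier_basis n"
    "schreier_gen n (tr 1 \<circ> tr 2 \<circ> tr 3) 1 \<in> schreier_basis n"
    unfolding schreier_basis_def using two_free_edges[OF n] by force+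
  ultimately show ?thesis
    by (intro free_basis_nonabelian[OF group_PL free_basis_schreier_basis]) auto
qed

theorem proposition5p3:
  fixes n :: nat
  assumes "n \<ge> 2"
  shows "((free_group_finite_rank (PL n) \<and> nonabelian (PL n)) \<longleftrightarrow> n \<ge> 4) \<and>
         (n \<le> 3 \<longrightarrow> carrier (PL n) = {\<one>\<^bsub>PL n\<^esub>})"
proof -
  have "\<not> nonabelian (PL n)" if "n \<le> 3"
    using carrier_PL_trivial[OF that] by (simp add: nonabelian_def)
  then show ?thesis
    using free_group_finite_rank_PL nonabelian_PL carrier_PL_trivial by force
qed

end
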